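(* Let $G$ be a non-amenable group with $G=H\times K$ for some groups $H,K$. Then $$\min\{\mathcal{T}(H),\mathcal{T}(K)\}\leq 2(\mathcal{T}(G)-1)^2.$$
   Context: A group $G$ admits a paradoxical decomposition if there exist positive integers $m,n$, pairwise disjoint subsets $P_1,\ldots,P_m,Q_1,\ldots,Q_n$ of $G$ and elements $g_1,\ldots,g_m,h_1,\ldots,h_n\in G$ such that $G=\bigcup_{i=1}^m P_ig_i=\bigcup_{j=1}^n Q_jh_j$; this happens if and only if $G$ is non-amenable. For a non-amenable group $G$, the Tarski number $\mathcal{T}(G)$ is the minimal value of $m+n$ over all paradoxical decompositions of $G$; for an amenable group the Tarski number is taken to be $\infty$. *)

theory Defs
  imports "HOL-Algebra.Algebra" "HOL-Library.Extended_Nat"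
begin

definition paradoxical_decomp :: "('a, 'b) monoid_scheme \<Rightarrow> nat \<Rightarrow> nat \<Rightarrow> bool" where
  "paradoxical_decomp G m n \<longleftrightarrow> 0 < m \<and> 0 < n \<and>
     (\<exists>P Q g h.
        (\<forall>i<m. P i \<subseteq> carrier G \<and> g i \<in> carrier G) \<and>
        (\<forall>j<n. Q j \<subseteq> carrier G \<and> h j \<in> carrier G) \<and>
        (\<forall>i<m. \<forall>i'<m. i \<noteq> i' \<longrightarrow> P i \<inter> P i' = {}) \<and>
        (\<forall>j<n. \<forall>j'<n. j \<noteq> j' \<longrightarrow> Q j \<inter> Q j' = {}) \<and>
        (\<forall>i<m. \<forall>j<n. P i \<inter> Q j = {}) \<and>
        (\<Union>i<m. P i #>\<^bsub>G\<^esub> g i) = carrier G \<and>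
        (\<Union>j<n. Q j #>\<^bsub>G\<^esub> h j) = carrier G)"

text \<open>Non-amenability, via Tarski's characterisation given in the context.\<close>
definition nonamenable :: "('a, 'b) monoid_scheme \<Rightarrow> bool" where
  "nonamenable G \<longleftrightarrow> (\<exists>m n. paradoxical_decomp G m n)"

text \<open>Tarski number; the infimum of the empty set is \<infinity> (amenable case).\<close>
definition tarski_number :: "('a, 'b) monoid_scheme \<Rightarrow> enat" where
  "tarski_number G = (INF p \<in> {(m, n). paradoxical_decomp G m n}. enat (fst p + snd p))"

end

theory Submission
  imports Defs Complex_Main
begin

text \<open>A paradoxical decomposition of \<open>G\<close> with \<open>m + n\<close> pieces yields a set \<open>S\<close> of at most
  \<open>m + n - 1\<close> elements with \<open>|F S| \<ge> 2 |F|\<close> for every finite \<open>F\<close>: each of the two halves of the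
  decomposition gives an injection \<open>F \<rightarrow> F S\<close>, and the two images are disjoint. Conversely,
  by Hall's marriage theorem every such doubling set \<open>R\<close> yields a paradoxical decomposition
  with \<open>|R| + |R|\<close> pieces. If \<open>G = H \<times> K\<close> and \<open>S\<close> doubles \<open>G\<close>, then, since
  \<open>|(A \<times> B) S| \<le> |A S\<^sub>H| |B S\<^sub>K|\<close>, one of the projections \<open>S\<^sub>H\<close>, \<open>S\<^sub>K\<close> expands its factor
  by \<open>\<surd>2\<close>. Two \<open>\<surd>2\<close>-expansions compose to a doubling, so \<open>S\<^sub>H S\<^sub>H\<close> or \<open>S\<^sub>K S\<^sub>K\<close>, of size at
  most \<open>(m + n - 1)\<^sup>2\<close>, gives a paradoxical decomposition of \<open>H\<close> or \<open>K\<close> with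
  \<open>2 (m + n - 1)\<^sup>2\<close> pieces.\<close>

section \<open>Hall's marriage theorem for locally finite graphs\<close>

definition hall_condition :: "'a set \<Rightarrow> ('a \<times> 'b) set \<Rightarrow> bool" where
  "hall_condition V E \<longleftrightarrow> (\<forall>L\<subseteq>V. finite L \<longrightarrow> card L \<le> card (E `` L))"

lemma finite_Image_locally_finite:
  "finite L \<Longrightarrow> (\<And>x. x \<in> L \<Longrightarrow> finite (E `` {x})) \<Longrightarrow> finite (E `` L)"
  by (metis Image_eq_UN finite_UN)

lemma hall_conditionD:
  "hall_condition V E \<Longrightarrow> L \<subseteq> V \<Longrightarrow> finite L \<Longrightarrow> card L \<le> card (E `` L)"
  by (simp add: hall_condition_def)

text \<open>Only finitely many edges leave a finite \<open>L\<close>, so along the chain they are eventually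
  removed by a single member.\<close>
lemma hall_condition_Diff_Union_chain:
  assumes fin: "\<And>x. x \<in> V \<Longrightarrow> finite (E `` {x})"
    and C: "C \<in> chains {D. D \<subseteq> E \<and> hall_condition V (E - D)}" "C \<noteq> {}"
  shows "hall_condition V (E - \<Union>C)"
  unfolding hall_condition_def
proof (intro allI impI)
  fix L assume L: "L \<subseteq> V" "finite L"
  have "E \<inter> L \<times> UNIV \<subseteq> Sigma L (\<lambda>x. E `` {x})" by blast
  moreover have "finite (Sigma L (\<lambda>x. E `` {x}))" using L fin by blast
  ultimately have "finite (E \<inter> L \<times> UNIV)" by (rule finite_subset)
  then have "finite (\<Union>C \<inter> (E \<inter> L \<times> UNIV))" by simp
  moreover have "subset.chain {D. D \<subseteq> E \<and> hall_condition V (E - D)} C"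
    using C(1) by (simp add: chains_alt_def)
  ultimately obtain B where B: "B \<in> C" "\<Union>C \<inter> (E \<inter> L \<times> UNIV) \<subseteq> B"
    using finite_subset_Union_chain[OF _ _ C(2)] by blast
  then have "hall_condition V (E - B)" using C(1) by (auto simp: chains_def)
  moreover have "(E - \<Union>C) `` L = (E - B) `` L" using B by blast
  ultimately show "card L \<le> card ((E - \<Union>C) `` L)" using L by (simp add: hall_conditionD)
qed

lemma hall_condition_obtain_critical_set:
  assumes "hall_condition V E" "\<not> hall_condition V (E - {(x, y)})"
  obtains L where "L \<subseteq> V" "finite L" "x \<in> L" "card ((E - {(x, y)}) `` L) < card L"
proof -
  obtain L where L: "L \<subseteq> V" "finite L" "card ((E - {(x, y)}) `` L) < card L"
    using assms(2) unfolding hall_condition_def by (meson not_le)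
  moreover have "x \<in> L"
  proof (rule ccontr)
    assume "x \<notin> L"
    then have "(E - {(x, y)}) `` L = E `` L" by blast
    then show False using L hall_conditionD[OF assms(1) L(1,2)] by simp
  qed
  ultimately show thesis using that by blast
qed

text \<open>Two critical sets through the same vertex would violate Hall's condition on their union
  and intersection.\<close>
lemma hall_condition_minimal_single_valued:
  assumes hall: "hall_condition V E" and fin: "\<And>x. x \<in> V \<Longrightarrow> finite (E `` {x})"
    and minimal: "\<And>y. (x, y) \<in> E \<Longrightarrow> \<not> hall_condition V (E - {(x, y)})"
    and y: "(x, y1) \<in> E" "(x, y2) \<in> E"
  shows "y1 = y2"
proof (rule ccontr)
  assume ne: "y1 \<noteq> y2"
  obtain L1 where L1: "L1 \<subseteq> V" "finite L1" "x \<in> L1" "card ((E - {(x, y1)}) `` L1) < card L1"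
    using hall_condition_obtain_critical_set[OF hall minimal[OF y(1)]] by blast
  obtain L2 where L2: "L2 \<subseteq> V" "finite L2" "x \<in> L2" "card ((E - {(x, y2)}) `` L2) < card L2"
    using hall_condition_obtain_critical_set[OF hall minimal[OF y(2)]] by blast
  define U1 where "U1 = (E - {(x, y1)}) `` L1"
  define U2 where "U2 = (E - {(x, y2)}) `` L2"
  have "finite (E `` L)" if "L \<subseteq> V" "finite L" for L
    using that fin by (meson finite_Image_locally_finite subsetD)
  then have fU: "finite U1" "finite U2"
    unfolding U1_def U2_def using L1 L2 by (meson Diff_subset Image_mono finite_subset order_refl)+
  have "card (L1 \<union> L2) \<le> card (E `` (L1 \<union> L2))"
    using L1 L2 by (intro hall_conditionD[OF hall]) auto
  also have "\<dots> \<le> card (U1 \<union> U2)"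
    using ne L1 L2 fU by (intro card_mono) (auto simp: U1_def U2_def)
  finally have union: "card (L1 \<union> L2) \<le> card (U1 \<union> U2)" .
  have "card (L1 \<inter> L2 - {x}) \<le> card (E `` (L1 \<inter> L2 - {x}))"
    using L1 L2 by (intro hall_conditionD[OF hall]) auto
  also have "\<dots> \<le> card (U1 \<inter> U2)"
    using fU by (intro card_mono) (auto simp: U1_def U2_def)
  finally have inter: "card (L1 \<inter> L2 - {x}) \<le> card (U1 \<inter> U2)" .
  have "card (L1 \<inter> L2) = card (L1 \<inter> L2 - {x}) + 1"
    using L1 L2 by (metis IntI Suc_eq_plus1 card_Suc_Diff1 finite_Int)
  moreover have "card U1 + card U2 = card (U1 \<union> U2) + card (U1 \<inter> U2)"
    using fU card_Un_Int by blast
  moreover have "card L1 + card L2 = card (L1 \<union> L2) + card (L1 \<inter> L2)"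
    using L1 L2 card_Un_Int by blast
  ultimately show False using union inter L1(4) L2(4) unfolding U1_def U2_def by linarith
qed

lemma hall_condition_single_valued_inj:
  assumes hall: "hall_condition V E"
    and single: "\<And>x y1 y2. x \<in> V \<Longrightarrow> (x, y1) \<in> E \<Longrightarrow> (x, y2) \<in> E \<Longrightarrow> y1 = y2"
  shows "\<exists>f. inj_on f V \<and> (\<forall>x\<in>V. (x, f x) \<in> E)"
proof -
  have "\<exists>y. (x, y) \<in> E" if "x \<in> V" for x
  proof -
    have "card {x} \<le> card (E `` {x})" using that by (intro hall_conditionD[OF hall]) auto
    then have "E `` {x} \<noteq> {}" by auto
    then show ?thesis by blast
  qed
  then obtain f where f: "\<And>x. x \<in> V \<Longrightarrow> (x, f x) \<in> E" by metis
  have "inj_on f V"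
  proof (rule inj_onI, rule ccontr)
    fix a b assume ab: "a \<in> V" "b \<in> V" "f a = f b" "a \<noteq> b"
    have "E `` {a, b} \<subseteq> {f a}"
    proof
      fix y assume "y \<in> E `` {a, b}"
      then have "(a, y) \<in> E \<or> (b, y) \<in> E" by blast
      then show "y \<in> {f a}" using single f ab(1-3) by (metis singletonI)
    qed
    then have "card (E `` {a, b}) \<le> 1" using card_mono[of "{f a}"] by simp
    moreover have "card {a, b} \<le> card (E `` {a, b})"
      using hall ab by (intro hall_conditionD) auto
    ultimately show False using ab by simp
  qed
  then show ?thesis using f by blast
qed

text \<open>Zorn's lemma yields an edge set that is minimal for Hall's condition, and minimality
  forces it to be the graph of a function.\<close>
theorem hall_marriage_locally_finite:
  assumes fin: "\<And>x. x \<in> V \<Longrightarrow> finite (E `` {x})" and hall: "hall_condition V E"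
  shows "\<exists>f. inj_on f V \<and> (\<forall>x\<in>V. (x, f x) \<in> E)"
proof -
  define \<D> where "\<D> = {D. D \<subseteq> E \<and> hall_condition V (E - D)}"
  have "\<Union>C \<in> \<D>" if C: "C \<in> chains \<D>" for C
  proof (cases "C = {}")
    case True
    then show ?thesis using hall by (simp add: \<D>_def)
  next
    case False
    have "\<Union>C \<subseteq> E" using C by (auto simp: \<D>_def chains_def)
    moreover have "hall_condition V (E - \<Union>C)"
      using hall_condition_Diff_Union_chain[OF fin _ False] C by (simp add: \<D>_def)
    ultimately show ?thesis by (simp add: \<D>_def)
  qed
  then have "\<exists>M\<in>\<D>. \<forall>D\<in>\<D>. M \<subseteq> D \<longrightarrow> D = M" by (intro Zorn_Lemma) blast
  then obtain M where M: "M \<in> \<D>" and max: "\<And>D. D \<in> \<D> \<Longrightarrow> M \<subseteq> D \<Longrightarrow> D = M"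
    by blast
  define E' where "E' = E - M"
  have hall': "hall_condition V E'" using M by (simp add: \<D>_def E'_def)
  have fin': "finite (E' `` {x})" if "x \<in> V" for x
    by (rule finite_subset[OF _ fin[OF that]]) (unfold E'_def, blast)
  have minimal: "\<not> hall_condition V (E' - {(x, y)})" if "(x, y) \<in> E'" for x y
  proof
    assume hall_xy: "hall_condition V (E' - {(x, y)})"
    have "insert (x, y) M \<subseteq> E" using M that by (auto simp: \<D>_def E'_def)
    moreover have "E - insert (x, y) M = E' - {(x, y)}" by (auto simp: E'_def)
    ultimately have "insert (x, y) M \<in> \<D>" using hall_xy by (simp add: \<D>_def)
    then show False using max[of "insert (x, y) M"] that by (auto simp: E'_def)
  qed
  have "y1 = y2" if "(x, y1) \<in> E'" "(x, y2) \<in> E'" for x y1 y2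
    using hall_condition_minimal_single_valued[OF hall' fin' minimal that] .
  then have "\<exists>f. inj_on f V \<and> (\<forall>x\<in>V. (x, f x) \<in> E')"
    using hall_condition_single_valued_inj[OF hall'] by blast
  then show ?thesis by (auto simp: E'_def)
qed

section \<open>Expansion of finite sets in groups\<close>

lemma set_mult_eq_image:
  "A <#>\<^bsub>G\<^esub> B = (\<lambda>(x, y). x \<otimes>\<^bsub>G\<^esub> y) ` (A \<times> B)"
  by (auto simp: set_mult_def)

lemma finite_set_mult: "finite A \<Longrightarrow> finite B \<Longrightarrow> finite (A <#>\<^bsub>G\<^esub> B)"
  by (simp add: set_mult_eq_image)

lemma card_set_mult_le: "finite A \<Longrightarrow> finite B \<Longrightarrow> card (A <#>\<^bsub>G\<^esub> B) \<le> card A * card B"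
  unfolding set_mult_eq_image
  by (metis card_cartesian_product card_image_le finite_cartesian_product)

lemma set_mult_eq_UN_l_coset: "A <#>\<^bsub>G\<^esub> B = (\<Union>x\<in>A. x <#\<^bsub>G\<^esub> B)"
  by (auto simp: set_mult_def l_coset_def)

definition expands_by :: "('a, 'b) monoid_scheme \<Rightarrow> real \<Rightarrow> 'a set \<Rightarrow> bool" where
  "expands_by G c S \<longleftrightarrow>
     (\<forall>A. A \<subseteq> carrier G \<longrightarrow> finite A \<longrightarrow> c * card A \<le> card (A <#>\<^bsub>G\<^esub> S))"

lemma expands_byD:
  "expands_by G c S \<Longrightarrow> A \<subseteq> carrier G \<Longrightarrow> finite A \<Longrightarrow> c * card A \<le> card (A <#>\<^bsub>G\<^esub> S)"
  by (simp add: expands_by_def)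

lemma (in group) expands_by_nonempty:
  assumes "expands_by G c S" "0 < c"
  shows "S \<noteq> {}"
  using expands_byD[OF assms(1), of "{\<one>}"] assms(2) by (auto simp: set_mult_def)

lemma (in group) expands_by_set_mult:
  assumes R: "expands_by G a R" "R \<subseteq> carrier G" "finite R"
    and S: "expands_by G b S" "S \<subseteq> carrier G" "0 \<le> b"
  shows "expands_by G (a * b) (R <#> S)"
  unfolding expands_by_def
proof (intro allI impI)
  fix A assume A: "A \<subseteq> carrier G" "finite A"
  have AR: "A <#> R \<subseteq> carrier G" "finite (A <#> R)"
    using A R set_mult_closed finite_set_mult by auto
  have "a * b * card A = b * (a * card A)" by simp
  also have "\<dots> \<le> b * card (A <#> R)"
    using expands_byD[OF R(1) A] S(3) by (rule mult_left_mono)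
  also have "\<dots> \<le> card ((A <#> R) <#> S)" using expands_byD[OF S(1) AR] .
  also have "(A <#> R) <#> S = A <#> (R <#> S)" using A R S by (simp add: set_mult_assoc)
  finally show "a * b * card A \<le> card (A <#> (R <#> S))" .
qed

lemma expands_by_iso:
  assumes "monoid G" "\<phi> \<in> iso G G'" "S \<subseteq> carrier G" "expands_by G c S"
  shows "expands_by G' c (\<phi> ` S)"
  unfolding expands_by_def
proof (intro allI impI)
  fix A assume A: "A \<subseteq> carrier G'" "finite A"
  have hom: "\<phi> \<in> hom G G'" and bij: "bij_betw \<phi> (carrier G) (carrier G')"
    using assms(2) by (auto simp: iso_def)
  define A' where "A' = {x \<in> carrier G. \<phi> x \<in> A}"
  have A': "A' \<subseteq> carrier G" "\<phi> ` A' = A" "inj_on \<phi> A'"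
    using A(1) bij by (auto simp: A'_def bij_betw_def inj_on_subset)
  then have "finite A'" "card A' = card A" using A(2) by (auto simp: finite_image_iff card_image)
  have "c * card A' \<le> card (A' <#>\<^bsub>G\<^esub> S)" using expands_byD[OF assms(4) A'(1)] \<open>finite A'\<close> .
  also have "card (A' <#>\<^bsub>G\<^esub> S) = card (\<phi> ` (A' <#>\<^bsub>G\<^esub> S))"
    using monoid.set_mult_closed[OF assms(1) A'(1) assms(3)] bij
    by (intro card_image[symmetric]) (auto simp: bij_betw_def intro: inj_on_subset)
  also have "\<phi> ` (A' <#>\<^bsub>G\<^esub> S) = A <#>\<^bsub>G'\<^esub> \<phi> ` S"
    using set_mult_hom[OF hom A'(1) assms(3)] A'(2) by simp
  finally show "c * card A \<le> card (A <#>\<^bsub>G'\<^esub> \<phi> ` S)" using \<open>card A' = card A\<close> by simp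
qed

lemma expands_by_DirProd_fst_or_snd:
  fixes H :: "('a, 'b) monoid_scheme" and K :: "('c, 'd) monoid_scheme"
  assumes exp: "expands_by (H \<times>\<times> K) c S" and "finite S" and "a * b \<le> c"
  shows "expands_by H a (fst ` S) \<or> expands_by K b (snd ` S)"
proof (rule ccontr)
  assume "\<not> ?thesis"
  then obtain A B where A: "A \<subseteq> carrier H" "finite A" "card (A <#>\<^bsub>H\<^esub> fst ` S) < a * card A"
    and B: "B \<subseteq> carrier K" "finite B" "card (B <#>\<^bsub>K\<^esub> snd ` S) < b * card B"
    by (auto simp: expands_by_def not_le)
  have "(A \<times> B) <#>\<^bsub>H \<times>\<times> K\<^esub> S \<subseteq> (A <#>\<^bsub>H\<^esub> fst ` S) \<times> (B <#>\<^bsub>K\<^esub> snd ` S)"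
    by (force simp: set_mult_def mult_DirProd')
  then have "card ((A \<times> B) <#>\<^bsub>H \<times>\<times> K\<^esub> S)
      \<le> card (A <#>\<^bsub>H\<^esub> fst ` S) * card (B <#>\<^bsub>K\<^esub> snd ` S)"
    using A B \<open>finite S\<close> by (metis card_cartesian_product card_mono finite_SigmaI finite_imageI finite_set_mult)
  then have "real (card ((A \<times> B) <#>\<^bsub>H \<times>\<times> K\<^esub> S))
      \<le> real (card (A <#>\<^bsub>H\<^esub> fst ` S)) * real (card (B <#>\<^bsub>K\<^esub> snd ` S))"
    by (metis of_nat_le_iff of_nat_mult)
  also have "\<dots> < (a * card A) * (b * card B)"
    using A(3) B(3) by (intro mult_strict_mono) auto
  also have "\<dots> = (a * b) * card (A \<times> B)" by (simp add: card_cartesian_product mult_ac)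
  also have "\<dots> \<le> c * card (A \<times> B)" using \<open>a * b \<le> c\<close> by (intro mult_right_mono) auto
  also have "\<dots> \<le> card ((A \<times> B) <#>\<^bsub>H \<times>\<times> K\<^esub> S)"
    using A B by (intro expands_byD[OF exp]) auto
  finally show False by simp
qed

section \<open>Paradoxical decompositions and doubling sets\<close>

text \<open>Hall's theorem for two copies of \<open>G\<close>, each \<open>x\<close> being joined to the elements of \<open>x R\<close>.\<close>
lemma (in group) doubling_injection:
  assumes "expands_by G 2 R" "finite R"
  shows "\<exists>f. inj_on f (carrier G \<times> (UNIV :: bool set)) \<and>
    (\<forall>(x, b) \<in> carrier G \<times> UNIV. f (x, b) \<in> x <# R)"
proof -
  define E :: "(('a \<times> bool) \<times> 'a) set" where "E = {((x, b), y). x \<in> carrier G \<and> y \<in> x <# R}"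
  have "E `` {(x, b)} \<subseteq> {x} <#> R" for x b by (auto simp: E_def l_coset_eq_set_mult)
  then have "finite (E `` {(x, b)})" for x b
    using assms(2) by (meson finite.emptyI finite_insert finite_set_mult finite_subset)
  moreover have "hall_condition (carrier G \<times> UNIV) E"
    unfolding hall_condition_def
  proof (intro allI impI)
    fix L :: "('a \<times> bool) set" assume L: "L \<subseteq> carrier G \<times> UNIV" "finite L"
    have A: "fst ` L \<subseteq> carrier G" "finite (fst ` L)" using L by auto
    have "L \<subseteq> fst ` L \<times> UNIV" by force
    then have "card L \<le> card (fst ` L \<times> (UNIV :: bool set))" using A(2) by (intro card_mono) auto
    also have "\<dots> = 2 * card (fst ` L)" by (simp add: card_cartesian_product)
    also have "\<dots> \<le> card (fst ` L <#> R)"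
      using expands_byD[OF assms(1) A] by linarith
    also have "fst ` L <#> R = E `` L"
      using L by (force simp: set_mult_eq_UN_l_coset E_def)
    finally show "card L \<le> card (E `` L)" .
  qed
  ultimately obtain f where "inj_on f (carrier G \<times> UNIV)" "\<forall>v \<in> carrier G \<times> UNIV. (v, f v) \<in> E"
    using hall_marriage_locally_finite[of "carrier G \<times> UNIV" E] by auto
  then show ?thesis by (auto simp: E_def)
qed

lemma paradoxical_decomp_reindex:
  assumes I: "finite I" "I \<noteq> {}" and J: "finite J" "J \<noteq> {}"
    and PQ: "\<forall>i\<in>I. P i \<subseteq> carrier G \<and> g i \<in> carrier G" "\<forall>j\<in>J. Q j \<subseteq> carrier G \<and> h j \<in> carrier G"
    and disjoint: "\<forall>i\<in>I. \<forall>i'\<in>I. i \<noteq> i' \<longrightarrow> P i \<inter> P i' = {}"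
      "\<forall>j\<in>J. \<forall>j'\<in>J. j \<noteq> j' \<longrightarrow> Q j \<inter> Q j' = {}" "\<forall>i\<in>I. \<forall>j\<in>J. P i \<inter> Q j = {}"
    and cover: "(\<Union>i\<in>I. P i #>\<^bsub>G\<^esub> g i) = carrier G" "(\<Union>j\<in>J. Q j #>\<^bsub>G\<^esub> h j) = carrier G"
  shows "paradoxical_decomp G (card I) (card J)"
proof -
  obtain e where e: "bij_betw e {..<card I} I"
    using ex_bij_betw_nat_finite[OF I(1)] by (auto simp: atLeast0LessThan)
  obtain d where d: "bij_betw d {..<card J} J"
    using ex_bij_betw_nat_finite[OF J(1)] by (auto simp: atLeast0LessThan)
  have e_in: "e i \<in> I" if "i < card I" for i using e that by (auto simp: bij_betw_def)
  have d_in: "d j \<in> J" if "j < card J" for j using d that by (auto simp: bij_betw_def)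
  have e_inj: "e i \<noteq> e i'" if "i < card I" "i' < card I" "i \<noteq> i'" for i i'
    using e that by (auto simp: bij_betw_def inj_on_def)
  have d_inj: "d j \<noteq> d j'" if "j < card J" "j' < card J" "j \<noteq> j'" for j j'
    using d that by (auto simp: bij_betw_def inj_on_def)
  have "(\<Union>i<card I. P (e i) #>\<^bsub>G\<^esub> g (e i)) = (\<Union>i\<in>e ` {..<card I}. P i #>\<^bsub>G\<^esub> g i)"
    by simp
  also have "\<dots> = carrier G" using cover(1) bij_betw_imp_surj_on[OF e] by simp
  finally have cover_e: "(\<Union>i<card I. P (e i) #>\<^bsub>G\<^esub> g (e i)) = carrier G" .
  have "(\<Union>j<card J. Q (d j) #>\<^bsub>G\<^esub> h (d j)) = (\<Union>j\<in>d ` {..<card J}. Q j #>\<^bsub>G\<^esub> h j)"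
    by simp
  also have "\<dots> = carrier G" using cover(2) bij_betw_imp_surj_on[OF d] by simp
  finally have cover_d: "(\<Union>j<card J. Q (d j) #>\<^bsub>G\<^esub> h (d j)) = carrier G" .
  show ?thesis
    unfolding paradoxical_decomp_def using I J PQ disjoint e_in d_in e_inj d_inj cover_e cover_d
    by (intro conjI exI[of _ "P \<circ> e"] exI[of _ "Q \<circ> d"] exI[of _ "g \<circ> e"] exI[of _ "h \<circ> d"])
      (simp_all add: card_gt_0_iff)
qed

lemma (in group) paradoxical_decomp_of_injection:
  assumes R: "R \<subseteq> carrier G" "finite R" "R \<noteq> {}"
    and inj: "inj_on f (carrier G \<times> (UNIV :: bool set))"
    and f: "\<And>x b. x \<in> carrier G \<Longrightarrow> f (x, b) \<in> x <# R"
  shows "paradoxical_decomp G (card R) (card R)"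
proof -
  define piece where "piece b r = {f (x, b) |x. x \<in> carrier G \<and> f (x, b) = x \<otimes> r}" for b r
  have r_carrier: "r \<in> carrier G" if "r \<in> R" for r using R that by auto
  have cover: "(\<Union>r\<in>R. piece b r #> inv r) = carrier G" for b
  proof (intro equalityI subsetI)
    fix y assume "y \<in> (\<Union>r\<in>R. piece b r #> inv r)"
    then show "y \<in> carrier G" by (auto simp: piece_def r_coset_def r_carrier)
  next
    fix x assume x: "x \<in> carrier G"
    then obtain r where r: "r \<in> R" "f (x, b) = x \<otimes> r" using f[OF x] by (auto simp: l_coset_def)
    then have "x = f (x, b) \<otimes> inv r" using x r_carrier by (simp add: m_assoc)
    moreover have "f (x, b) \<in> piece b r" using x r unfolding piece_def by blast
    ultimately show "x \<in> (\<Union>r\<in>R. piece b r #> inv r)" using r by (auto simp: r_coset_def)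
  qed
  have disjoint: "piece b r \<inter> piece b' r' = {}" if "(b, r) \<noteq> (b', r')" "r \<in> R" "r' \<in> R"
    for b b' r r'
  proof (rule ccontr)
    assume "piece b r \<inter> piece b' r' \<noteq> {}"
    then obtain x x' where x: "x \<in> carrier G" "x' \<in> carrier G" "f (x, b) = f (x', b')"
      "f (x, b) = x \<otimes> r" "f (x', b') = x' \<otimes> r'"
      by (auto simp: piece_def)
    then have "x = x'" "b = b'" using inj_onD[OF inj x(3)] by auto
    then have "r = r'" using x that r_carrier by simp
    then show False using that \<open>b = b'\<close> by simp
  qed
  have "piece b r \<subseteq> carrier G" if "r \<in> R" for b r
    using that r_carrier by (auto simp: piece_def)
  then show ?thesis
    using R cover disjoint r_carrier
    by (intro paradoxical_decomp_reindex[where P = "piece True" and Q = "piece False"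
          and g = "\<lambda>r. inv r" and h = "\<lambda>r. inv r"]) simp_all
qed

lemma (in group) paradoxical_decomp_of_doubling:
  assumes "expands_by G 2 R" "R \<subseteq> carrier G" "finite R"
  shows "paradoxical_decomp G (card R) (card R)"
proof -
  obtain f where "inj_on f (carrier G \<times> (UNIV :: bool set))" "\<forall>(x, b) \<in> carrier G \<times> UNIV. f (x, b) \<in> x <# R"
    using doubling_injection[OF assms(1,3)] by blast
  moreover have "R \<noteq> {}" using expands_by_nonempty[OF assms(1)] by simp
  ultimately show ?thesis using assms(2,3) by (intro paradoxical_decomp_of_injection) auto
qed

lemma (in group) covering_injection:
  fixes m :: nat
  assumes PQ: "\<forall>i<m. P i \<subseteq> carrier G \<and> g i \<in> carrier G"
    and disjoint: "\<forall>i<m. \<forall>i'<m. i \<noteq> i' \<longrightarrow> P i \<inter> P i' = {}"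
    and cover: "(\<Union>i<m. P i #> g i) = carrier G"
  obtains a where "inj_on a (carrier G)" "\<And>x. x \<in> carrier G \<Longrightarrow> \<exists>i<m. a x = x \<otimes> inv (g i) \<and> a x \<in> P i"
proof -
  have "\<exists>i<m. x \<otimes> inv (g i) \<in> P i" if x: "x \<in> carrier G" for x
  proof -
    have "x \<in> (\<Union>i<m. P i #> g i)" using x cover by simp
    then obtain i p where "i < m" "p \<in> P i" "x = p \<otimes> g i"
      unfolding r_coset_def by blast
    moreover have "p \<in> carrier G" "g i \<in> carrier G" using PQ calculation by auto
    ultimately show ?thesis by (auto simp: m_assoc)
  qed
  then obtain idx where idx: "\<And>x. x \<in> carrier G \<Longrightarrow> idx x < m \<and> x \<otimes> inv (g (idx x)) \<in> P (idx x)"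
    by metis
  define a where "a x = x \<otimes> inv (g (idx x))" for x
  have "inj_on a (carrier G)"
  proof (rule inj_onI)
    fix x y assume xy: "x \<in> carrier G" "y \<in> carrier G" "a x = a y"
    have "a x \<in> P (idx x)" "a y \<in> P (idx y)" "idx x < m" "idx y < m"
      using idx xy(1,2) unfolding a_def by auto
    then have "idx x = idx y" using disjoint xy(3) by (metis IntI empty_iff)
    moreover have "g (idx x) \<in> carrier G" using PQ idx xy by blast
    ultimately show "x = y" using xy unfolding a_def by simp
  qed
  moreover have "\<exists>i<m. a x = x \<otimes> inv (g i) \<and> a x \<in> P i" if "x \<in> carrier G" for x
    using idx[OF that] unfolding a_def by blast
  ultimately show thesis using that by blast
qed

lemma (in group) r_coset_cover_shift:
  fixes n :: nat
  assumes "\<forall>j<n. Q j \<subseteq> carrier G \<and> h j \<in> carrier G" "(\<Union>j<n. Q j #> h j) = carrier G"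
    and "t \<in> carrier G"
  shows "(\<Union>j<n. Q j #> (h j \<otimes> t)) = carrier G"
proof -
  have "(\<Union>j<n. Q j #> (h j \<otimes> t)) = (\<Union>j<n. (Q j #> h j) #> t)"
    using assms(1,3) by (simp add: coset_mult_assoc)
  also have "\<dots> = (\<Union>j<n. Q j #> h j) #> t" unfolding r_coset_def by blast
  also have "\<dots> = carrier G" using assms(2,3) subgroup.rcos_const[OF subgroup_self] by simp
  finally show ?thesis .
qed

lemma (in group) expands_by_two_of_injections:
  assumes S: "S \<subseteq> carrier G" "finite S"
    and inj: "inj_on a (carrier G)" "inj_on b (carrier G)"
    and ab: "\<And>x. x \<in> carrier G \<Longrightarrow> a x \<in> x <# S" "\<And>x. x \<in> carrier G \<Longrightarrow> b x \<in> x <# S"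
    and disjoint: "\<And>x y. x \<in> carrier G \<Longrightarrow> y \<in> carrier G \<Longrightarrow> a x \<noteq> b y"
  shows "expands_by G 2 S"
  unfolding expands_by_def
proof (intro allI impI)
  fix F assume F: "F \<subseteq> carrier G" "finite F"
  have "2 * card F = card (a ` F) + card (b ` F)"
    using inj F(1) by (simp add: card_image inj_on_subset)
  also have "\<dots> = card (a ` F \<union> b ` F)"
    using F disjoint by (intro card_Un_disjoint[symmetric]) auto
  also have "\<dots> \<le> card (F <#> S)"
  proof (rule card_mono)
    show "finite (F <#> S)" using F S by (simp add: finite_set_mult)
    have "a x \<in> F <#> S" "b x \<in> F <#> S" if "x \<in> F" for x
      using ab[of x] that F(1) unfolding set_mult_eq_UN_l_coset by auto
    then show "a ` F \<union> b ` F \<subseteq> F <#> S" by blast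
  qed
  finally have "2 * card F \<le> card (F <#> S)" by linarith
  then show "2 * real (card F) \<le> card (F <#> S)" by simp
qed

lemma (in group) expands_by_translations_of_paradoxical_decomp:
  fixes m n :: nat
  assumes PQ: "\<forall>i<m. P i \<subseteq> carrier G \<and> g i \<in> carrier G" "\<forall>j<n. Q j \<subseteq> carrier G \<and> h j \<in> carrier G"
    and disjoint: "\<forall>i<m. \<forall>i'<m. i \<noteq> i' \<longrightarrow> P i \<inter> P i' = {}"
      "\<forall>j<n. \<forall>j'<n. j \<noteq> j' \<longrightarrow> Q j \<inter> Q j' = {}" "\<forall>i<m. \<forall>j<n. P i \<inter> Q j = {}"
    and cover: "(\<Union>i<m. P i #> g i) = carrier G" "(\<Union>j<n. Q j #> h j) = carrier G"
  shows "expands_by G 2 ((\<lambda>i. inv (g i)) ` {..<m} \<union> (\<lambda>j. inv (h j)) ` {..<n})"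
    (is "expands_by G 2 (?U \<union> ?V)")
proof -
  obtain a where a: "inj_on a (carrier G)" "\<And>x. x \<in> carrier G \<Longrightarrow> \<exists>i<m. a x = x \<otimes> inv (g i) \<and> a x \<in> P i"
    using covering_injection[OF PQ(1) disjoint(1) cover(1)] by blast
  obtain b where b: "inj_on b (carrier G)" "\<And>x. x \<in> carrier G \<Longrightarrow> \<exists>j<n. b x = x \<otimes> inv (h j) \<and> b x \<in> Q j"
    using covering_injection[OF PQ(2) disjoint(2) cover(2)] by blast
  show ?thesis
  proof (rule expands_by_two_of_injections[OF _ _ a(1) b(1)])
    show "?U \<union> ?V \<subseteq> carrier G" using PQ by auto
    show "finite (?U \<union> ?V)" by simp
    fix x assume x: "x \<in> carrier G"
    obtain i where i: "i < m" "a x = x \<otimes> inv (g i)" using a(2)[OF x] by blast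
    then have "inv (g i) \<in> ?U \<union> ?V" by (intro UnI1 imageI) simp
    then show "a x \<in> x <# (?U \<union> ?V)" unfolding i(2) l_coset_def by (rule UN_I) simp
    obtain j where j: "j < n" "b x = x \<otimes> inv (h j)" using b(2)[OF x] by blast
    then have "inv (h j) \<in> ?U \<union> ?V" by (intro UnI2 imageI) simp
    then show "b x \<in> x <# (?U \<union> ?V)" unfolding j(2) l_coset_def by (rule UN_I) simp
  next
    fix x y assume xy: "x \<in> carrier G" "y \<in> carrier G"
    obtain i where i: "i < m" "a x \<in> P i" using a(2)[OF xy(1)] by blast
    obtain j where j: "j < n" "b y \<in> Q j" using b(2)[OF xy(2)] by blast
    have "P i \<inter> Q j = {}" using disjoint(3) i(1) j(1) by simp
    then show "a x \<noteq> b y" using i(2) j(2) by auto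
  qed
qed

lemma card_Un_le_if_Int_nonempty:
  assumes "finite U" "finite V" "U \<inter> V \<noteq> {}"
  shows "card (U \<union> V) \<le> card U + card V - 1"
proof -
  have "card (U \<inter> V) \<noteq> 0" using assms by simp
  then show ?thesis using card_Un_Int[OF assms(1,2)] by linarith
qed

text \<open>Right-translating the second half of the decomposition by \<open>h\<^sub>0\<inverse> g\<^sub>0\<close> makes the two
  families of translations share \<open>g\<^sub>0\<inverse>\<close>, which saves one element.\<close>
lemma (in group) expanding_set_of_paradoxical_decomp:
  assumes "paradoxical_decomp G m n"
  shows "\<exists>S \<subseteq> carrier G. finite S \<and> card S \<le> m + n - 1 \<and> expands_by G 2 S"
proof -
  obtain P Q g h where mn: "0 < m" "0 < n"
    and PQ: "\<forall>i<m. P i \<subseteq> carrier G \<and> g i \<in> carrier G" "\<forall>j<n. Q j \<subseteq> carrier G \<and> h j \<in> carrier G"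
    and disjoint: "\<forall>i<m. \<forall>i'<m. i \<noteq> i' \<longrightarrow> P i \<inter> P i' = {}"
      "\<forall>j<n. \<forall>j'<n. j \<noteq> j' \<longrightarrow> Q j \<inter> Q j' = {}" "\<forall>i<m. \<forall>j<n. P i \<inter> Q j = {}"
    and cover: "(\<Union>i<m. P i #> g i) = carrier G" "(\<Union>j<n. Q j #> h j) = carrier G"
    using assms unfolding paradoxical_decomp_def by (elim conjE exE) (rule that; assumption)
  define h' where "h' j = h j \<otimes> (inv (h 0) \<otimes> g 0)" for j
  have h': "\<forall>j<n. Q j \<subseteq> carrier G \<and> h' j \<in> carrier G" "h' 0 = g 0"
    using PQ mn by (auto simp: h'_def m_assoc[symmetric])
  have cover': "(\<Union>j<n. Q j #> h' j) = carrier G"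
    unfolding h'_def using PQ mn by (intro r_coset_cover_shift cover(2)) auto
  define U where "U = (\<lambda>i. inv (g i)) ` {..<m}"
  define V where "V = (\<lambda>j. inv (h' j)) ` {..<n}"
  have "inv (g 0) \<in> U" unfolding U_def by (rule image_eqI[where x = 0]) (simp_all add: mn)
  moreover have "inv (g 0) \<in> V" unfolding V_def by (rule image_eqI[where x = 0]) (simp_all add: mn h'(2))
  ultimately have "U \<inter> V \<noteq> {}" by blast
  then have "card (U \<union> V) \<le> card U + card V - 1"
    by (intro card_Un_le_if_Int_nonempty) (simp_all add: U_def V_def)
  moreover have "card U \<le> m" "card V \<le> n"
    unfolding U_def V_def by (metis card_image_le card_lessThan finite_lessThan)+
  ultimately have "card (U \<union> V) \<le> m + n - 1" by linarith
  moreover have "U \<union> V \<subseteq> carrier G" "finite (U \<union> V)" using PQ h'(1) by (auto simp: U_def V_def)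
  moreover have "expands_by G 2 (U \<union> V)"
    unfolding U_def V_def using PQ(1) h'(1) disjoint cover(1) cover'
    by (rule expands_by_translations_of_paradoxical_decomp)
  ultimately show ?thesis by blast
qed

section \<open>Tarski numbers\<close>

lemma tarski_number_le: "paradoxical_decomp G m n \<Longrightarrow> tarski_number G \<le> enat (m + n)"
  unfolding tarski_number_def by (rule INF_lower2[of "(m, n)"]) auto

lemma tarski_number_attained:
  assumes "nonamenable G"
  obtains m n where "paradoxical_decomp G m n" "tarski_number G = enat (m + n)"
proof -
  define T where "T = (\<lambda>(m, n). enat (m + n)) ` {(m, n). paradoxical_decomp G m n}"
  have "T \<noteq> {}" using assms by (auto simp: T_def nonamenable_def)
  then have "Inf T \<in> T" by (auto simp: Inf_enat_def intro: LeastI)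
  moreover have "tarski_number G = Inf T" by (simp add: tarski_number_def T_def case_prod_beta)
  ultimately show thesis using that by (auto simp: T_def)
qed

lemma (in group) tarski_number_le_of_sqrt2_expansion:
  assumes "expands_by G (sqrt 2) S" "S \<subseteq> carrier G" "finite S" "card S \<le> k"
  shows "tarski_number G \<le> enat (2 * k ^ 2)"
proof -
  define R where "R = S <#> S"
  have "expands_by G (sqrt 2 * sqrt 2) R"
    unfolding R_def using assms by (intro expands_by_set_mult) auto
  then have "expands_by G 2 R" by simp
  moreover have R: "R \<subseteq> carrier G" "finite R"
    using assms by (auto simp: R_def set_mult_closed finite_set_mult)
  ultimately have "tarski_number G \<le> enat (card R + card R)"
    by (intro tarski_number_le paradoxical_decomp_of_doubling)
  also have "card R \<le> k ^ 2"
    using assms(3,4) card_set_mult_le[OF assms(3,3)] unfolding R_def power2_eq_square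
    by (meson le_trans mult_le_mono)
  then have "enat (card R + card R) \<le> enat (2 * k ^ 2)" by simp
  finally show ?thesis .
qed

lemma min_tarski_number_le_of_DirProd_doubling:
  fixes H :: "('a, 'b) monoid_scheme" and K :: "('c, 'd) monoid_scheme"
  assumes "group H" "group K" "expands_by (H \<times>\<times> K) 2 S" "S \<subseteq> carrier H \<times> carrier K"
    and "finite S" "card S \<le> k"
  shows "min (tarski_number H) (tarski_number K) \<le> enat (2 * k ^ 2)"
proof -
  have carriers: "fst ` S \<subseteq> carrier H" "snd ` S \<subseteq> carrier K" using assms(4) by auto
  have cards: "card (fst ` S) \<le> k" "card (snd ` S) \<le> k"
    using assms(5,6) by (meson card_image_le le_trans)+
  have "expands_by H (sqrt 2) (fst ` S) \<or> expands_by K (sqrt 2) (snd ` S)"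
    using assms(3,5) by (intro expands_by_DirProd_fst_or_snd) auto
  then show ?thesis
  proof (elim disjE)
    assume "expands_by H (sqrt 2) (fst ` S)"
    from group.tarski_number_le_of_sqrt2_expansion[OF assms(1) this carriers(1) _ cards(1)]
    show ?thesis using assms(5) by (simp add: min_le_iff_disj)
  next
    assume "expands_by K (sqrt 2) (snd ` S)"
    from group.tarski_number_le_of_sqrt2_expansion[OF assms(2) this carriers(2) _ cards(2)]
    show ?thesis using assms(5) by (simp add: min_le_iff_disj)
  qed
qed

theorem theorem1:
  fixes G :: "('a, 'c) monoid_scheme" and H :: "('b, 'd) monoid_scheme"
    and K :: "('e, 'f) monoid_scheme"
  assumes "group G" and "group H" and "group K"
    and "G \<cong> H \<times>\<times> K"
    and "nonamenable G"
  shows "min (tarski_number H) (tarski_number K) \<le> 2 * (tarski_number G - 1) ^ 2"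
proof -
  obtain \<phi> where \<phi>: "\<phi> \<in> iso G (H \<times>\<times> K)" using assms(4) by (auto simp: is_iso_def)
  obtain m n where pd: "paradoxical_decomp G m n" and T: "tarski_number G = enat (m + n)"
    using tarski_number_attained[OF assms(5)] by blast
  obtain S where S: "S \<subseteq> carrier G" "finite S" "card S \<le> m + n - 1" and "expands_by G 2 S"
    using group.expanding_set_of_paradoxical_decomp[OF assms(1) pd] by blast
  then have "expands_by (H \<times>\<times> K) 2 (\<phi> ` S)"
    using expands_by_iso[OF group.is_monoid[OF assms(1)] \<phi>] by blast
  moreover have "\<phi> ` S \<subseteq> carrier H \<times> carrier K"
    using S(1) \<phi> unfolding iso_def bij_betw_def by auto
  moreover have "card (\<phi> ` S) \<le> m + n - 1" using S(3) card_image_le[OF S(2)] by (rule order_trans[rotated])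
  ultimately have "min (tarski_number H) (tarski_number K) \<le> enat (2 * (m + n - 1) ^ 2)"
    using S(2) by (intro min_tarski_number_le_of_DirProd_doubling assms(2,3)) auto
  also have "\<dots> = 2 * (tarski_number G - 1) ^ 2"
    by (simp add: T one_enat_def numeral_eq_enat power2_eq_square)
  finally show ?thesis .
qed

end
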